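(* Let $\mu_Y\in\mathbb{R}$, $\sigma_Y>0$, $n\ge 2$, and let $X_1,\dots,X_n$ be i.i.d. random variables with $X_i\sim LN(\mu_Y,\sigma_Y^2)$. Let $A_n=\frac1n\sum_{i=1}^n X_i$, $H_n=n\big/\sum_{i=1}^n (1/X_i)$ and $K_n=\frac{A_n}{H_n}-1$. Then $$E(K_n)=\frac{n-1}{n}\,k=\frac{n-1}{n}\,C_v^2,$$ where $k=C_v^2=\exp(\sigma_Y^2)-1$.
   Context: $X\sim LN(\mu_Y,\sigma_Y^2)$ means $\ln X\sim N(\mu_Y,\sigma_Y^2)$, i.e. $X$ has density $f(x)=\frac{1}{x\sigma_Y\sqrt{2\pi}}\exp\!\big(-\frac{(\ln x-\mu_Y)^2}{2\sigma_Y^2}\big)$ for $x>0$. For such $X$, $\alpha=E[X]$ is the arithmetic mean, $\beta^2=E[(X-\alpha)^2]$ the variance, $C_v=\beta/\alpha$ the coefficient of variation, $h=1/E[1/X]$ the harmonic mean, and $k=\alpha/h-1$ the relative ratio; one has $k=C_v^2=\exp(\sigma_Y^2)-1$. $A_n$ is the sample arithmetic mean, $H_n$ the sample harmonic mean, and $K_n$ the sample relative ratio. *)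

theory Defs
  imports "HOL-Probability.Probability"
begin

definition lognormal_density :: "real \<Rightarrow> real \<Rightarrow> real \<Rightarrow> real" where
  "lognormal_density \<mu> \<sigma> x =
     (if x > 0 then exp (- ((ln x - \<mu>)\<^sup>2) / (2 * \<sigma>\<^sup>2)) / (x * \<sigma> * sqrt (2 * pi)) else 0)"

end

theory Submission
  imports Defs
begin

text \<open>Expanding the product, \<open>A\<^sub>n / H\<^sub>n\<close> is \<open>1 / n\<^sup>2\<close> times the sum of \<open>X\<^sub>i / X\<^sub>j\<close> over all
  pairs \<open>(i, j)\<close>. The \<open>n\<close> diagonal terms equal 1,
  and by independence each of the \<open>n(n - 1)\<close> off-diagonal terms has mean
  \<open>E X \<cdot> E (1/X) = \<alpha> / h = 1 + k\<close>, so \<open>E K\<^sub>n = (n + n(n - 1)(1 + k)) / n\<^sup>2 - 1 = (n - 1) k / n\<close>.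
  The moments \<open>E X\<^sup>p = exp (p\<mu> + p\<^sup>2\<sigma>\<^sup>2/2)\<close> of the log-normal law come from the substitution
  \<open>x = exp y\<close>, which turns \<open>x\<^sup>p\<close> times the density into a multiple of a normal density.\<close>

lemma nn_integral_exp_substitution:
  fixes f :: "real \<Rightarrow> real"
  assumes [measurable]: "f \<in> borel_measurable borel"
  shows "(\<integral>\<^sup>+x. ennreal (f x) * indicator {0<..} x \<partial>lborel) =
         (\<integral>\<^sup>+y. ennreal (f (exp y) * exp y) \<partial>lborel)"
proof -
  let ?F = "density lborel (\<lambda>x. ennreal (f x))"
  let ?G = "density lborel (\<lambda>y. ennreal (f (exp y) * exp y))"
  have bounded: "emeasure ?F {exp (- real N)..exp (real N)} = emeasure ?G {- real N..real N}" for N :: nat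
  proof -
    have "emeasure ?F {exp (- real N)..exp (real N)} =
        (\<integral>\<^sup>+x. ennreal (f x * indicator {exp (- real N)..exp (real N)} x) \<partial>lborel)"
      by (subst emeasure_density) (auto intro!: nn_integral_cong split: split_indicator)
    also have "\<dots> = (\<integral>\<^sup>+y. ennreal (f (exp y) * exp y * indicator {- real N..real N} y) \<partial>lborel)"
      by (rule nn_integral_substitution) (auto simp: set_borel_measurable_def intro!: DERIV_exp continuous_on_exp)
    also have "\<dots> = emeasure ?G {- real N..real N}"
      by (subst emeasure_density) (auto intro!: nn_integral_cong split: split_indicator)
    finally show ?thesis .
  qed
  have union_pos: "(\<Union>N::nat. {exp (- real N)..exp (real N)}) = {0<..}"
  proof (intro equalityI subsetI)
    fix x :: real assume "x \<in> {0<..}"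
    obtain N :: nat where "\<bar>ln x\<bar> \<le> real N" using real_arch_simple by blast
    then have "exp (- real N) \<le> exp (ln x)" "exp (ln x) \<le> exp (real N)"
      by (simp_all only: exp_le_cancel_iff abs_le_iff minus_le_iff)
    with \<open>x \<in> {0<..}\<close> show "x \<in> (\<Union>N::nat. {exp (- real N)..exp (real N)})" by auto
  qed (auto, metis exp_gt_zero less_le_trans)
  have union_real: "(\<Union>N::nat. {- real N..real N}) = UNIV"
  proof (rule sym, rule UNIV_eq_I)
    fix y :: real
    obtain N :: nat where "\<bar>y\<bar> \<le> real N" using real_arch_simple by blast
    then show "y \<in> (\<Union>N::nat. {- real N..real N})" by (intro UN_I[of N]) (auto simp: abs_le_iff)
  qed
  have "emeasure ?F {0<..} = (SUP N. emeasure ?F {exp (- real N)..exp (real N)})"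
    unfolding union_pos[symmetric]
    by (rule SUP_emeasure_incseq[symmetric]) (auto simp: incseq_def intro: order_trans[rotated])
  also have "\<dots> = (SUP N. emeasure ?G {- real N..real N})"
    by (simp only: bounded)
  also have "\<dots> = emeasure ?G UNIV"
    unfolding union_real[symmetric]
    by (rule SUP_emeasure_incseq) (auto simp: incseq_def)
  finally show ?thesis
    by (simp add: emeasure_density)
qed

lemma borel_measurable_lognormal_density[measurable]:
  "lognormal_density \<mu> \<sigma> \<in> borel_measurable borel"
  unfolding lognormal_density_def[abs_def] by measurable

lemma lognormal_density_exp_powr:
  assumes "\<sigma> > 0"
  shows "lognormal_density \<mu> \<sigma> (exp y) * exp y powr p * exp y =
         exp (p * \<mu> + p\<^sup>2 * \<sigma>\<^sup>2 / 2) * normal_density (\<mu> + p * \<sigma>\<^sup>2) \<sigma> y"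
proof -
  have sqrt: "sqrt (2 * pi * \<sigma>\<^sup>2) = \<sigma> * sqrt (2 * pi)"
    using assms by (simp add: real_sqrt_mult)
  \<comment> \<open>completing the square in the exponent\<close>
  have "- (y - \<mu>)\<^sup>2 / (2 * \<sigma>\<^sup>2) + p * y =
      (p * \<mu> + p\<^sup>2 * \<sigma>\<^sup>2 / 2) + (- (y - (\<mu> + p * \<sigma>\<^sup>2))\<^sup>2 / (2 * \<sigma>\<^sup>2))"
    using assms by (simp add: field_simps power2_eq_square)
  then have exponent: "exp (- (y - \<mu>)\<^sup>2 / (2 * \<sigma>\<^sup>2)) * exp (p * y) =
      exp (p * \<mu> + p\<^sup>2 * \<sigma>\<^sup>2 / 2) * exp (- (y - (\<mu> + p * \<sigma>\<^sup>2))\<^sup>2 / (2 * \<sigma>\<^sup>2))"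
    by (metis exp_add)
  have "lognormal_density \<mu> \<sigma> (exp y) * exp y powr p * exp y =
      exp (- (y - \<mu>)\<^sup>2 / (2 * \<sigma>\<^sup>2)) * exp (p * y) / (\<sigma> * sqrt (2 * pi))"
    using assms by (simp add: lognormal_density_def powr_def field_simps)
  then show ?thesis
    unfolding exponent normal_density_def sqrt by simp
qed

lemma (in prob_space) lognormal_distributed_AE_pos:
  assumes "distributed M lborel X (lognormal_density \<mu> \<sigma>)"
  shows "AE \<omega> in M. X \<omega> > 0"
  by (subst distributed_AE2[OF assms]) (auto simp: lognormal_density_def)

lemma (in prob_space) lognormal_moment:
  fixes X :: "'a \<Rightarrow> real" and g :: "real \<Rightarrow> real"
  assumes "\<sigma> > 0" and D: "distributed M lborel X (lognormal_density \<mu> \<sigma>)"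
    and [measurable]: "g \<in> borel_measurable borel"
    and g_powr: "\<And>x. x > 0 \<Longrightarrow> g x = x powr p"
  shows "integrable M (\<lambda>\<omega>. g (X \<omega>))"
    and "expectation (\<lambda>\<omega>. g (X \<omega>)) = exp (p * \<mu> + p\<^sup>2 * \<sigma>\<^sup>2 / 2)"
proof -
  let ?c = "exp (p * \<mu> + p\<^sup>2 * \<sigma>\<^sup>2 / 2)"
  have "(\<integral>\<^sup>+\<omega>. ennreal (g (X \<omega>)) \<partial>M) =
      (\<integral>\<^sup>+x. ennreal (lognormal_density \<mu> \<sigma> x) * ennreal (g x) \<partial>lborel)"
    using distributed_nn_integral[OF D, of "\<lambda>x. ennreal (g x)"] by simp
  also have "\<dots> = (\<integral>\<^sup>+x. ennreal (lognormal_density \<mu> \<sigma> x * x powr p) * indicator {0<..} x \<partial>lborel)"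
    using \<open>\<sigma> > 0\<close>
    by (intro nn_integral_cong)
       (auto simp: g_powr lognormal_density_def ennreal_mult[symmetric] split: split_indicator)
  also have "\<dots> = (\<integral>\<^sup>+y. ennreal (lognormal_density \<mu> \<sigma> (exp y) * exp y powr p * exp y) \<partial>lborel)"
    by (subst nn_integral_exp_substitution) auto
  also have "\<dots> = (\<integral>\<^sup>+y. ennreal ?c * ennreal (normal_density (\<mu> + p * \<sigma>\<^sup>2) \<sigma> y) \<partial>lborel)"
    by (intro nn_integral_cong) (simp add: lognormal_density_exp_powr[OF \<open>\<sigma> > 0\<close>] ennreal_mult')
  also have "\<dots> = ennreal ?c * (\<integral>\<^sup>+y. ennreal (normal_density (\<mu> + p * \<sigma>\<^sup>2) \<sigma> y) \<partial>lborel)"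
    by (rule nn_integral_cmult) simp
  also have "(\<integral>\<^sup>+y. ennreal (normal_density (\<mu> + p * \<sigma>\<^sup>2) \<sigma> y) \<partial>lborel) = 1"
    using \<open>\<sigma> > 0\<close> by (subst nn_integral_eq_integral) auto
  finally have "(\<integral>\<^sup>+\<omega>. ennreal (g (X \<omega>)) \<partial>M) = ennreal ?c"
    by simp
  moreover have "AE \<omega> in M. 0 \<le> g (X \<omega>)"
    using lognormal_distributed_AE_pos[OF D] by eventually_elim (simp add: g_powr)
  moreover have "X \<in> borel_measurable M"
    using D by (simp add: distributed_def)
  ultimately have "integrable M (\<lambda>\<omega>. g (X \<omega>)) \<and> expectation (\<lambda>\<omega>. g (X \<omega>)) = ?c"
    by (subst nn_integral_eq_integrable[symmetric]) auto
  then show "integrable M (\<lambda>\<omega>. g (X \<omega>))" "expectation (\<lambda>\<omega>. g (X \<omega>)) = ?c"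
    by auto
qed

lemma (in prob_space)
  assumes "\<sigma> > 0" and D: "distributed M lborel X (lognormal_density \<mu> \<sigma>)"
  shows integrable_lognormal: "integrable M X"
    and integrable_lognormal_inverse: "integrable M (\<lambda>\<omega>. 1 / X \<omega>)"
    and lognormal_expectation: "expectation X = exp (\<mu> + \<sigma>\<^sup>2 / 2)"
    and lognormal_expectation_inverse: "expectation (\<lambda>\<omega>. 1 / X \<omega>) = exp (- \<mu> + \<sigma>\<^sup>2 / 2)"
    and lognormal_variance: "variance X = exp (2 * \<mu> + \<sigma>\<^sup>2) * (exp (\<sigma>\<^sup>2) - 1)"
proof -
  note moment = lognormal_moment[OF assms]
  show "integrable M X" and EX: "expectation X = exp (\<mu> + \<sigma>\<^sup>2 / 2)"
    using moment[of "\<lambda>x. x" 1] by simp_all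
  show "integrable M (\<lambda>\<omega>. 1 / X \<omega>)" "expectation (\<lambda>\<omega>. 1 / X \<omega>) = exp (- \<mu> + \<sigma>\<^sup>2 / 2)"
    using moment[of "\<lambda>x. 1 / x" "-1"] by (simp_all add: powr_minus_divide)
  have "integrable M (\<lambda>\<omega>. (X \<omega>)\<^sup>2)" and EX2: "expectation (\<lambda>\<omega>. (X \<omega>)\<^sup>2) = exp (2 * \<mu> + 2 * \<sigma>\<^sup>2)"
    using moment[of "\<lambda>x. x\<^sup>2" 2] by simp_all
  then have "variance X = exp (2 * \<mu> + 2 * \<sigma>\<^sup>2) - (exp (\<mu> + \<sigma>\<^sup>2 / 2))\<^sup>2"
    using variance_eq[OF \<open>integrable M X\<close>] EX EX2 by simp
  also have "\<dots> = exp (2 * \<mu> + \<sigma>\<^sup>2) * (exp (\<sigma>\<^sup>2) - 1)"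
    by (simp add: algebra_simps power2_eq_square flip: exp_add)
  finally show "variance X = exp (2 * \<mu> + \<sigma>\<^sup>2) * (exp (\<sigma>\<^sup>2) - 1)" .
qed


lemma (in prob_space) indep_vars_expectation_mult:
  fixes X :: "'i \<Rightarrow> 'a \<Rightarrow> real" and f g :: "real \<Rightarrow> real"
  assumes indep: "indep_vars (\<lambda>_. borel) X I" and "i \<in> I" "j \<in> I" "i \<noteq> j"
    and [measurable]: "f \<in> borel_measurable borel" "g \<in> borel_measurable borel"
    and int: "integrable M (\<lambda>\<omega>. f (X i \<omega>))" "integrable M (\<lambda>\<omega>. g (X j \<omega>))"
  shows "integrable M (\<lambda>\<omega>. f (X i \<omega>) * g (X j \<omega>))"
    and "expectation (\<lambda>\<omega>. f (X i \<omega>) * g (X j \<omega>)) =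
         expectation (\<lambda>\<omega>. f (X i \<omega>)) * expectation (\<lambda>\<omega>. g (X j \<omega>))"
proof -
  define Y where "Y l = (if l = i then f else g)" for l
  have indep_pair: "indep_vars (\<lambda>_. borel) (\<lambda>l \<omega>. Y l (X l \<omega>)) {i, j}"
    using assms by (intro indep_vars_compose2[OF indep_vars_subset[OF indep]]) (auto simp: Y_def)
  have int_pair: "integrable M (\<lambda>\<omega>. Y l (X l \<omega>))" if "l \<in> {i, j}" for l
    using that int \<open>i \<noteq> j\<close> by (auto simp: Y_def)
  have "(\<lambda>\<omega>. \<Prod>l\<in>{i, j}. Y l (X l \<omega>)) = (\<lambda>\<omega>. f (X i \<omega>) * g (X j \<omega>))"
    using \<open>i \<noteq> j\<close> by (simp add: Y_def)
  with indep_vars_integrable[OF _ indep_pair int_pair] indep_vars_lebesgue_integral[OF _ indep_pair int_pair]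
  show "integrable M (\<lambda>\<omega>. f (X i \<omega>) * g (X j \<omega>))"
    and "expectation (\<lambda>\<omega>. f (X i \<omega>) * g (X j \<omega>)) =
         expectation (\<lambda>\<omega>. f (X i \<omega>)) * expectation (\<lambda>\<omega>. g (X j \<omega>))"
    using \<open>i \<noteq> j\<close> by (simp_all add: Y_def)
qed

lemma (in prob_space) expectation_sum_mult_sum_inverse:
  fixes X :: "'i \<Rightarrow> 'a \<Rightarrow> real"
  assumes "finite I" and indep: "indep_vars (\<lambda>_. borel) X I"
    and pos: "\<And>i. i \<in> I \<Longrightarrow> AE \<omega> in M. X i \<omega> > 0"
    and int: "\<And>i. i \<in> I \<Longrightarrow> integrable M (X i)" "\<And>i. i \<in> I \<Longrightarrow> integrable M (\<lambda>\<omega>. 1 / X i \<omega>)"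
    and E: "\<And>i. i \<in> I \<Longrightarrow> expectation (X i) = a" "\<And>i. i \<in> I \<Longrightarrow> expectation (\<lambda>\<omega>. 1 / X i \<omega>) = b"
  shows "integrable M (\<lambda>\<omega>. (\<Sum>i\<in>I. X i \<omega>) * (\<Sum>j\<in>I. 1 / X j \<omega>))"
    and "expectation (\<lambda>\<omega>. (\<Sum>i\<in>I. X i \<omega>) * (\<Sum>j\<in>I. 1 / X j \<omega>)) =
         real (card I) * (1 + (real (card I) - 1) * a * b)"
proof -
  have pair: "integrable M (\<lambda>\<omega>. X i \<omega> * (1 / X j \<omega>)) \<and>
      expectation (\<lambda>\<omega>. X i \<omega> * (1 / X j \<omega>)) = (if i = j then 1 else a * b)"
    if "i \<in> I" "j \<in> I" for i j
  proof (cases "i = j")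
    case True
    have [measurable]: "X j \<in> borel_measurable M"
      using int(1)[OF \<open>j \<in> I\<close>] by (rule borel_measurable_integrable)
    have one: "AE \<omega> in M. 1 = X j \<omega> * (1 / X j \<omega>)"
      using pos[OF \<open>j \<in> I\<close>] by eventually_elim simp
    have "integrable M (\<lambda>_. 1::real) = integrable M (\<lambda>\<omega>. X j \<omega> * (1 / X j \<omega>))"
      by (rule integrable_cong_AE[OF _ _ one]) simp_all
    moreover have "expectation (\<lambda>_. 1::real) = expectation (\<lambda>\<omega>. X j \<omega> * (1 / X j \<omega>))"
      by (rule integral_cong_AE[OF _ _ one]) simp_all
    ultimately show ?thesis
      using True by (simp add: prob_space del: times_divide_eq_right)
  next
    case False
    then show ?thesis
      using indep_vars_expectation_mult[OF indep that False, of "\<lambda>x. x" "\<lambda>x. 1 / x"] int E that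
      by simp
  qed
  have row: "(\<Sum>j\<in>I. if i = j then 1 else a * b) = 1 + (real (card I) - 1) * a * b" if "i \<in> I" for i
  proof -
    have "card I \<ge> 1"
      using that \<open>finite I\<close> by (simp add: Suc_le_eq card_gt_0_iff) blast
    have "(\<Sum>j\<in>I. if i = j then 1 else a * b) = 1 + (\<Sum>j\<in>I - {i}. if i = j then 1 else a * b)"
      using that \<open>finite I\<close> by (simp add: sum.remove)
    also have "(\<Sum>j\<in>I - {i}. if i = j then 1 else a * b) = (\<Sum>j\<in>I - {i}. a * b)"
      by (rule sum.cong) auto
    finally show ?thesis
      using that \<open>card I \<ge> 1\<close> by (simp add: card_Diff_singleton of_nat_diff)
  qed
  have product: "(\<lambda>\<omega>. (\<Sum>i\<in>I. X i \<omega>) * (\<Sum>j\<in>I. 1 / X j \<omega>)) =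
      (\<lambda>\<omega>. \<Sum>i\<in>I. \<Sum>j\<in>I. X i \<omega> * (1 / X j \<omega>))"
    by (simp add: sum_product)
  show "integrable M (\<lambda>\<omega>. (\<Sum>i\<in>I. X i \<omega>) * (\<Sum>j\<in>I. 1 / X j \<omega>))"
    unfolding product using pair by auto
  have "expectation (\<lambda>\<omega>. (\<Sum>i\<in>I. X i \<omega>) * (\<Sum>j\<in>I. 1 / X j \<omega>)) =
      (\<Sum>i\<in>I. \<Sum>j\<in>I. expectation (\<lambda>\<omega>. X i \<omega> * (1 / X j \<omega>)))"
    unfolding product using pair by (simp add: integral_sum)
  also have "\<dots> = (\<Sum>i\<in>I. 1 + (real (card I) - 1) * a * b)"
    using pair row by simp
  finally show "expectation (\<lambda>\<omega>. (\<Sum>i\<in>I. X i \<omega>) * (\<Sum>j\<in>I. 1 / X j \<omega>)) =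
      real (card I) * (1 + (real (card I) - 1) * a * b)"
    by simp
qed

theorem proposition1:
  fixes M :: "'a measure" and X :: "nat \<Rightarrow> 'a \<Rightarrow> real"
    and \<mu> \<sigma> :: real and n :: nat
  assumes "prob_space M"
    and "\<sigma> > 0" and "n \<ge> 2"
    and "prob_space.indep_vars M (\<lambda>_. borel) X {1..n}"
    and "\<And>i. i \<in> {1..n} \<Longrightarrow> distributed M lborel (X i) (lognormal_density \<mu> \<sigma>)"
  shows "let A = (\<lambda>\<omega>. (\<Sum>i=1..n. X i \<omega>) / real n);
             H = (\<lambda>\<omega>. real n / (\<Sum>i=1..n. 1 / X i \<omega>));
             K = (\<lambda>\<omega>. A \<omega> / H \<omega> - 1);
             \<alpha> = prob_space.expectation M (X 1);
             \<beta> = sqrt (prob_space.variance M (X 1));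
             C\<^sub>v = \<beta> / \<alpha>;
             h = 1 / prob_space.expectation M (\<lambda>\<omega>. 1 / X 1 \<omega>);
             k = \<alpha> / h - 1
         in prob_space.expectation M K = (real n - 1) / real n * k
          \<and> k = C\<^sub>v\<^sup>2 \<and> k = exp (\<sigma>\<^sup>2) - 1"
proof -
  interpret prob_space M by fact
  have D: "\<And>i. i \<in> {1..n} \<Longrightarrow> distributed M lborel (X i) (lognormal_density \<mu> \<sigma>)"
    and "\<sigma> > 0" and "1 \<in> {1..n}" and "real n > 0"
    using assms by auto
  let ?\<alpha> = "exp (\<mu> + \<sigma>\<^sup>2 / 2)" and ?e = "exp (\<sigma>\<^sup>2)"
  have mean_inverse: "?\<alpha> * exp (- \<mu> + \<sigma>\<^sup>2 / 2) = ?e" and mean_sq: "?\<alpha>\<^sup>2 = exp (2 * \<mu> + \<sigma>\<^sup>2)"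
    by (simp_all add: power2_eq_square flip: exp_add)
  have relative_ratio: "expectation (X 1) / (1 / expectation (\<lambda>\<omega>. 1 / X 1 \<omega>)) - 1 = ?e - 1"
    using lognormal_expectation[OF \<open>\<sigma> > 0\<close> D] lognormal_expectation_inverse[OF \<open>\<sigma> > 0\<close> D]
      \<open>1 \<in> {1..n}\<close> mean_inverse by simp
  have coefficient_of_variation: "(sqrt (variance (X 1)) / expectation (X 1))\<^sup>2 = ?e - 1"
    using lognormal_expectation[OF \<open>\<sigma> > 0\<close> D] lognormal_variance[OF \<open>\<sigma> > 0\<close> D] \<open>1 \<in> {1..n}\<close>
      mean_sq by (simp add: power_divide)
  \<comment> \<open>\<open>A / H = (\<Sum>X\<^sub>i)(\<Sum>1/X\<^sub>j) / n\<^sup>2\<close> holds unconditionally, as \<open>x / (n / t) = x * t / n\<close> even for \<open>t = 0\<close>\<close>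
  have ratio: "(\<lambda>\<omega>. (\<Sum>i=1..n. X i \<omega>) / real n / (real n / (\<Sum>i=1..n. 1 / X i \<omega>)) - 1) =
      (\<lambda>\<omega>. (\<Sum>i=1..n. X i \<omega>) * (\<Sum>i=1..n. 1 / X i \<omega>) / (real n)\<^sup>2 - 1)"
    by (simp add: power2_eq_square)
  note products = expectation_sum_mult_sum_inverse[OF _ assms(4) lognormal_distributed_AE_pos[OF D]
      integrable_lognormal[OF \<open>\<sigma> > 0\<close> D] integrable_lognormal_inverse[OF \<open>\<sigma> > 0\<close> D]
      lognormal_expectation[OF \<open>\<sigma> > 0\<close> D] lognormal_expectation_inverse[OF \<open>\<sigma> > 0\<close> D]]
  have "expectation (\<lambda>\<omega>. (\<Sum>i=1..n. X i \<omega>) / real n / (real n / (\<Sum>i=1..n. 1 / X i \<omega>)) - 1) =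
      real n * (1 + (real n - 1) * ?e) / (real n)\<^sup>2 - 1"
    unfolding ratio using products mean_inverse by (simp add: prob_space mult.assoc)
  also have "\<dots> = (real n - 1) / real n * (?e - 1)"
    using \<open>real n > 0\<close> by (simp add: field_simps power2_eq_square)
  finally show ?thesis
    unfolding Let_def using relative_ratio coefficient_of_variation by simp
qed

end
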